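(* Let $N\ge 0$ be an integer, let $T^{(1)}=\{t^{(1)}_{n',n}\}_{0\le n',n\le N}$ and $T^{(2)}=\{t^{(2)}_{n',n}\}_{0\le n',n\le N}$ be real $(N+1)\times(N+1)$ matrices, and let $\{f'_{n_1,n_2}\}$ be real numbers indexed by the sparse index set $\{(n_1,n_2)\in\mathbb{N}_0^2: n_1+n_2\le N\}$. Define, for $n_1+n_2\le N$, $$f_{n_1,n_2}=\sum_{\substack{n_1',n_2'\ge 0\\ n_1'+n_2'\le N}} f'_{n_1',n_2'}\, t^{(1)}_{n_1',n_1}\, t^{(2)}_{n_2',n_2}.$$ 1. Define the "first $x_1$, then $x_2$" computation: for $n_1+n_2'\le N$, $g_{n_1,n_2'}=\sum_{0\le n_1'\le N-n_2'} f'_{n_1',n_2'}\,t^{(1)}_{n_1',n_1}$, and for $n_1+n_2\le N$, $\tilde f_{n_1,n_2}=\sum_{0\le n_2'\le N-n_1} g_{n_1,n_2'}\,t^{(2)}_{n_2',n_2}$. Suppose at least one of the following holds: (a) $T^{(1)}$ is lower triangular, i.e. $t^{(1)}_{n_1',n_1}=0$ whenever $n_1'<n_1$; (b) $T^{(2)}$ is upper triangular, i.e. $t^{(2)}_{n_2',n_2}=0$ whenever $n_2'>n_2$. Then $\tilde f_{n_1,n_2}=f_{n_1,n_2}$ for all $(n_1,n_2)$ with $n_1+n_2\le N$. 2. Define the "first $x_2$, then $x_1$" computation: for $n_1'+n_2\le N$, $h_{n_1',n_2}=\sum_{0\le n_2'\le N-n_1'} f'_{n_1',n_2'}\,t^{(2)}_{n_2',n_2}$,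 and for $n_1+n_2\le N$, $\hat f_{n_1,n_2}=\sum_{0\le n_1'\le N-n_2} h_{n_1',n_2}\,t^{(1)}_{n_1',n_1}$. Suppose at least one of the following holds: (a) $T^{(1)}$ is upper triangular, i.e. $t^{(1)}_{n_1',n_1}=0$ whenever $n_1'>n_1$; (b) $T^{(2)}$ is lower triangular, i.e. $t^{(2)}_{n_2',n_2}=0$ whenever $n_2'<n_2$. Then $\hat f_{n_1,n_2}=f_{n_1,n_2}$ for all $(n_1,n_2)$ with $n_1+n_2\le N$.
   Context: $\mathbb{N}_0$ denotes the nonnegative integers. All quantities $f'$, $g$, $h$, $f$, $\tilde f$, $\hat f$ are only defined on index pairs whose sum is at most $N$ (a sparse, triangular index set), which is why the ranges of summation in the dimension-by-dimension computations are truncated as written. *)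

theory Defs
  imports Complex_Main
begin

text \<open>The coefficients f' are given as a function nat => nat => real,
  only values on the sparse set n1 + n2 <= N are used.\<close>

definition sparse_idx :: "nat \<Rightarrow> (nat \<times> nat) set" where
  "sparse_idx N = {(a, b). a + b \<le> N}"

definition full_transform ::
  "nat \<Rightarrow> (nat \<Rightarrow> nat \<Rightarrow> real) \<Rightarrow> (nat \<Rightarrow> nat \<Rightarrow> real) \<Rightarrow> (nat \<Rightarrow> nat \<Rightarrow> real) \<Rightarrow> nat \<Rightarrow> nat \<Rightarrow> real"
  where "full_transform N t1 t2 f' n1 n2 =
    (\<Sum>(n1', n2') \<in> sparse_idx N. f' n1' n2' * t1 n1' n1 * t2 n2' n2)"

definition g_step :: "nat \<Rightarrow> (nat \<Rightarrow> nat \<Rightarrow> real) \<Rightarrow> (nat \<Rightarrow> nat \<Rightarrow> real) \<Rightarrow> nat \<Rightarrow> nat \<Rightarrow> real"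
  where "g_step N t1 f' n1 n2' = (\<Sum>n1' = 0..N - n2'. f' n1' n2' * t1 n1' n1)"

definition ftilde :: "nat \<Rightarrow> (nat \<Rightarrow> nat \<Rightarrow> real) \<Rightarrow> (nat \<Rightarrow> nat \<Rightarrow> real) \<Rightarrow> (nat \<Rightarrow> nat \<Rightarrow> real) \<Rightarrow> nat \<Rightarrow> nat \<Rightarrow> real"
  where "ftilde N t1 t2 f' n1 n2 = (\<Sum>n2' = 0..N - n1. g_step N t1 f' n1 n2' * t2 n2' n2)"

definition h_step :: "nat \<Rightarrow> (nat \<Rightarrow> nat \<Rightarrow> real) \<Rightarrow> (nat \<Rightarrow> nat \<Rightarrow> real) \<Rightarrow> nat \<Rightarrow> nat \<Rightarrow> real"
  where "h_step N t2 f' n1' n2 = (\<Sum>n2' = 0..N - n1'. f' n1' n2' * t2 n2' n2)"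

definition fhat :: "nat \<Rightarrow> (nat \<Rightarrow> nat \<Rightarrow> real) \<Rightarrow> (nat \<Rightarrow> nat \<Rightarrow> real) \<Rightarrow> (nat \<Rightarrow> nat \<Rightarrow> real) \<Rightarrow> nat \<Rightarrow> nat \<Rightarrow> real"
  where "fhat N t1 t2 f' n1 n2 = (\<Sum>n1' = 0..N - n2. h_step N t2 f' n1' n2 * t1 n1' n1)"

end

theory Submission
  imports Defs
begin

text \<open>Both iterated computations sum the same terms
  \<open>f' n1' n2' * t1 n1' n1 * t2 n2' n2\<close> as \<open>full_transform\<close>, but only over part of the
  triangle \<open>n1' + n2' \<le> N\<close>: \<open>ftilde\<close> drops the pairs with \<open>n2' > N - n1\<close>, which forces
  \<open>n1' < n1\<close> and \<open>n2' > n2\<close>, and \<open>fhat\<close> drops those with \<open>n1' > N - n2\<close>, which forces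
  \<open>n1' > n1\<close> and \<open>n2' < n2\<close>. Either triangularity hypothesis makes every dropped term vanish.\<close>

lemma finite_sparse_idx: "finite (sparse_idx N)"
proof (rule finite_subset)
  show "sparse_idx N \<subseteq> {0..N} \<times> {0..N}" by (auto simp: sparse_idx_def)
qed auto

lemma sum_sparse_idx_swap:
  "(\<Sum>(a, b)\<in>sparse_idx N. F a b) = (\<Sum>(b, a)\<in>sparse_idx N. F a b)"
  by (rule sum.reindex_bij_witness[of _ prod.swap prod.swap]) (auto simp: sparse_idx_def)

lemma sum_sparse_idx_truncate_fst:
  assumes vanish: "\<And>a b. a + b \<le> N \<Longrightarrow> N - k < a \<Longrightarrow> F a b = 0"
  shows "(\<Sum>a = 0..N - k. \<Sum>b = 0..N - a. F a b) = (\<Sum>(a, b)\<in>sparse_idx N. F a b)"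
proof -
  let ?S = "SIGMA a:{0..N - k}. {0..N - a}"
  have "(\<Sum>a = 0..N - k. \<Sum>b = 0..N - a. F a b) = (\<Sum>(a, b)\<in>?S. F a b)"
    by (rule sum.Sigma) auto
  also have "\<dots> = (\<Sum>(a, b)\<in>sparse_idx N. F a b)"
  proof (rule sum.mono_neutral_left[OF finite_sparse_idx])
    show "?S \<subseteq> sparse_idx N" by (auto simp: sparse_idx_def)
    show "\<forall>p\<in>sparse_idx N - ?S. (\<lambda>(a, b). F a b) p = 0"
      by (auto simp: sparse_idx_def intro!: vanish)
  qed
  finally show ?thesis .
qed

lemma sum_sparse_idx_truncate_snd:
  assumes "\<And>a b. a + b \<le> N \<Longrightarrow> N - k < b \<Longrightarrow> F a b = 0"
  shows "(\<Sum>b = 0..N - k. \<Sum>a = 0..N - b. F a b) = (\<Sum>(a, b)\<in>sparse_idx N. F a b)"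
proof -
  have "(\<Sum>b = 0..N - k. \<Sum>a = 0..N - b. F a b) = (\<Sum>(b, a)\<in>sparse_idx N. F a b)"
    by (rule sum_sparse_idx_truncate_fst) (use assms in \<open>simp add: add.commute\<close>)
  also have "\<dots> = (\<Sum>(a, b)\<in>sparse_idx N. F a b)"
    by (rule sum_sparse_idx_swap[symmetric])
  finally show ?thesis .
qed

lemma ftilde_eq_iterated_sum:
  "ftilde N t1 t2 f' n1 n2 =
     (\<Sum>b = 0..N - n1. \<Sum>a = 0..N - b. f' a b * t1 a n1 * t2 b n2)"
  unfolding ftilde_def g_step_def by (simp add: sum_distrib_right)

lemma fhat_eq_iterated_sum:
  "fhat N t1 t2 f' n1 n2 =
     (\<Sum>a = 0..N - n2. \<Sum>b = 0..N - a. f' a b * t1 a n1 * t2 b n2)"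
  unfolding fhat_def h_step_def by (simp add: sum_distrib_left mult_ac)

lemma ftilde_eq_full_transform:
  assumes triangular: "(\<forall>n1' \<le> N. \<forall>n1 \<le> N. n1' < n1 \<longrightarrow> t1 n1' n1 = 0) \<or>
                       (\<forall>n2' \<le> N. \<forall>n2 \<le> N. n2 < n2' \<longrightarrow> t2 n2' n2 = 0)"
    and "n1 + n2 \<le> N"
  shows "ftilde N t1 t2 f' n1 n2 = full_transform N t1 t2 f' n1 n2"
proof -
  have "f' a b * t1 a n1 * t2 b n2 = 0" if "a + b \<le> N" "N - n1 < b" for a b
  proof -
    have "a < n1" "n2 < b" "a \<le> N" "b \<le> N" "n1 \<le> N" "n2 \<le> N"
      using that \<open>n1 + n2 \<le> N\<close> by auto
    with triangular have "t1 a n1 = 0 \<or> t2 b n2 = 0" by blast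
    then show ?thesis by auto
  qed
  then show ?thesis
    unfolding ftilde_eq_iterated_sum full_transform_def
    by (rule sum_sparse_idx_truncate_snd)
qed

lemma fhat_eq_full_transform:
  assumes triangular: "(\<forall>n1' \<le> N. \<forall>n1 \<le> N. n1 < n1' \<longrightarrow> t1 n1' n1 = 0) \<or>
                       (\<forall>n2' \<le> N. \<forall>n2 \<le> N. n2' < n2 \<longrightarrow> t2 n2' n2 = 0)"
    and "n1 + n2 \<le> N"
  shows "fhat N t1 t2 f' n1 n2 = full_transform N t1 t2 f' n1 n2"
proof -
  have "f' a b * t1 a n1 * t2 b n2 = 0" if "a + b \<le> N" "N - n2 < a" for a b
  proof -
    have "n1 < a" "b < n2" "a \<le> N" "b \<le> N" "n1 \<le> N" "n2 \<le> N"
      using that \<open>n1 + n2 \<le> N\<close> by auto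
    with triangular have "t1 a n1 = 0 \<or> t2 b n2 = 0" by blast
    then show ?thesis by auto
  qed
  then show ?thesis
    unfolding fhat_eq_iterated_sum full_transform_def
    by (rule sum_sparse_idx_truncate_fst)
qed
theorem proposition3p1:
  fixes N :: nat
    and t1 t2 :: "nat \<Rightarrow> nat \<Rightarrow> real"
    and f' :: "nat \<Rightarrow> nat \<Rightarrow> real"
  shows "((\<forall>n1' \<le> N. \<forall>n1 \<le> N. n1' < n1 \<longrightarrow> t1 n1' n1 = 0) \<or>
          (\<forall>n2' \<le> N. \<forall>n2 \<le> N. n2 < n2' \<longrightarrow> t2 n2' n2 = 0)
          \<longrightarrow> (\<forall>n1 n2. n1 + n2 \<le> N \<longrightarrow>
                 ftilde N t1 t2 f' n1 n2 = full_transform N t1 t2 f' n1 n2))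
       \<and> ((\<forall>n1' \<le> N. \<forall>n1 \<le> N. n1 < n1' \<longrightarrow> t1 n1' n1 = 0) \<or>
          (\<forall>n2' \<le> N. \<forall>n2 \<le> N. n2' < n2 \<longrightarrow> t2 n2' n2 = 0)
          \<longrightarrow> (\<forall>n1 n2. n1 + n2 \<le> N \<longrightarrow>
                 fhat N t1 t2 f' n1 n2 = full_transform N t1 t2 f' n1 n2))"
  using ftilde_eq_full_transform[of N t1 t2] fhat_eq_full_transform[of N t1 t2] by blast

end
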